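(* Let $m,n\ge 2$ and let $\mathcal{A}$ be an $m$th order $n$-dimensional Hankel tensor with entries $a_{i_1\cdots i_m}=v_{i_1+\cdots+i_m-m}$ for a real vector $v=(v_0,\dots,v_{(n-1)m})^\top$. Let $\mathcal{P}$ be its associated plane tensor. If $\mathcal{A}$ is copositive, then $\mathcal{P}$ is copositive. If $m$ is even and $\mathcal{A}$ is positive semi-definite, then $\mathcal{P}$ is positive semi-definite.
   Context: For a real $l$th order $d$-dimensional tensor $\mathcal{B}=(b_{i_1\cdots i_l})$ and $x\in\mathbb{R}^d$, $\mathcal{B}x^l=\sum_{i_1,\dots,i_l=1}^d b_{i_1\cdots i_l}x_{i_1}\cdots x_{i_l}$. $\mathcal{B}$ is copositive if $\mathcal{B}x^l\ge0$ for all $x\in\mathbb{R}^d$ with $x\ge 0$; for even $l$, $\mathcal{B}$ is positive semi-definite if $\mathcal{B}x^l\ge 0$ for all $x\in\mathbb{R}^d$. For a nonnegative integer $k$, $s(k,m,n)$ denotes the number of ordered tuples $(i_1,\dots,i_m)$ with $i_j\in\{1,\dots,n\}$ and $i_1+\cdots+i_m-m=k$. The associated plane tensor of $\mathcal{A}$ is the symmetric tensor $\mathcal{P}=(p_{i_1\cdots i_{(n-1)m}})$ of order $(n-1)m$ and dimension $2$ defined by $p_{i_1\cdots i_{(n-1)m}}=\dfrac{s(k,m,n)\,v_k}{\binom{(n-1)m}{k}}$, where $k=i_1+\cdots+i_{(n-1)m}-(n-1)m$ and $i_j\in\{1,2\}$. *)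

theory Defs
  imports Complex_Main
begin

definition index_tuples :: "nat \<Rightarrow> nat \<Rightarrow> nat list set" where
  "index_tuples l d = {is. length is = l \<and> set is \<subseteq> {1..d}}"

text \<open>Vectors x in R^d are functions nat => real, only the values on {1..d} matter.\<close>
definition tensor_form :: "nat \<Rightarrow> nat \<Rightarrow> (nat list \<Rightarrow> real) \<Rightarrow> (nat \<Rightarrow> real) \<Rightarrow> real" where
  "tensor_form l d B x = (\<Sum>is\<in>index_tuples l d. B is * prod_list (map x is))"

definition copositive_tensor :: "nat \<Rightarrow> nat \<Rightarrow> (nat list \<Rightarrow> real) \<Rightarrow> bool" where
  "copositive_tensor l d B \<longleftrightarrow>
     (\<forall>x :: nat \<Rightarrow> real. (\<forall>i\<in>{1..d}. 0 \<le> x i) \<longrightarrow> 0 \<le> tensor_form l d B x)"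

definition psd_tensor :: "nat \<Rightarrow> nat \<Rightarrow> (nat list \<Rightarrow> real) \<Rightarrow> bool" where
  "psd_tensor l d B \<longleftrightarrow> (\<forall>x :: nat \<Rightarrow> real. 0 \<le> tensor_form l d B x)"

definition hankel_tensor :: "nat \<Rightarrow> (nat \<Rightarrow> real) \<Rightarrow> nat list \<Rightarrow> real" where
  "hankel_tensor m v = (\<lambda>is. v (sum_list is - m))"

definition s_count :: "nat \<Rightarrow> nat \<Rightarrow> nat \<Rightarrow> nat" where
  "s_count k m n = card {is \<in> index_tuples m n. sum_list is - m = k}"

definition plane_tensor :: "nat \<Rightarrow> nat \<Rightarrow> (nat \<Rightarrow> real) \<Rightarrow> nat list \<Rightarrow> real" where
  "plane_tensor m n v = (\<lambda>is. let k = sum_list is - (n - 1) * m in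
       real (s_count k m n) * v k / real (((n - 1) * m) choose k))"

end

theory Submission
  imports Defs
begin

text \<open>Both forms are polynomials in the level \<open>k = i_1 + ... + i_l - l\<close> of the index
  tuple. At the Vandermonde point \<open>x_i = a^(n-i) b^(i-1)\<close> the Hankel form collapses to
  \<open>\<Sum>_k s(k,m,n) v_k a^(L-k) b^k\<close> with \<open>L = (n-1)m\<close>; the plane form at \<open>(a,b)\<close> counts
  \<open>L choose k\<close> tuples of level \<open>k\<close>, which cancels the binomial coefficient in its entries,
  so it takes the same value. Every (nonnegative) point of the plane thus corresponds to a
  (nonnegative) point for the Hankel tensor with equal form values.\<close>

lemma finite_index_tuples: "finite (index_tuples l d)"
proof -
  have "index_tuples l d = {xs. set xs \<subseteq> {1..d} \<and> length xs = l}"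
    unfolding index_tuples_def by auto
  thus ?thesis using finite_lists_length_eq[of "{1..d}" l] by simp
qed

lemma index_tuples_Suc:
  "index_tuples (Suc l) d = (\<lambda>(i, is). i # is) ` ({1..d} \<times> index_tuples l d)"
proof (rule set_eqI)
  fix xs
  show "xs \<in> index_tuples (Suc l) d \<longleftrightarrow> xs \<in> (\<lambda>(i, is). i # is) ` ({1..d} \<times> index_tuples l d)"
    unfolding index_tuples_def by (cases xs) force+
qed

lemma sum_index_tuples_Suc:
  "(\<Sum>is\<in>index_tuples (Suc l) d. F is) = (\<Sum>i\<in>{1..d}. \<Sum>is\<in>index_tuples l d. F (i # is))"
proof -
  have "inj_on (\<lambda>(i, is). i # is) ({1..d} \<times> index_tuples l d)"
    by (auto simp: inj_on_def)
  hence "(\<Sum>is\<in>index_tuples (Suc l) d. F is) = (\<Sum>(i, is)\<in>{1..d} \<times> index_tuples l d. F (i # is))"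
    unfolding index_tuples_Suc by (subst sum.reindex) (auto simp: case_prod_beta)
  thus ?thesis by (simp add: sum.cartesian_product)
qed

lemma sum_list_index_tuples_bounds:
  assumes "is \<in> index_tuples l d"
  shows "l \<le> sum_list is" and "sum_list is \<le> d * l"
proof -
  have "l \<le> sum_list is \<and> sum_list is \<le> d * l"
    using assms
  proof (induction "is" arbitrary: l)
    case Nil thus ?case by (simp add: index_tuples_def)
  next
    case (Cons a xs)
    then obtain l' where "l = Suc l'" "xs \<in> index_tuples l' d" "a \<in> {1..d}"
      by (auto simp: index_tuples_def)
    with Cons.IH[of l'] show ?case by auto
  qed
  thus "l \<le> sum_list is" "sum_list is \<le> d * l" by auto
qed

lemma card_index_tuples_2_level:
  "card {is \<in> index_tuples L 2. sum_list is - L = k} = L choose k"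
proof -
  have "(\<Sum>is\<in>index_tuples L 2. if sum_list is - L = k then 1 else 0 :: nat) = L choose k" for k
  proof (induction L arbitrary: k)
    case 0
    have "index_tuples 0 2 = {[]}" by (auto simp: index_tuples_def)
    thus ?case by simp
  next
    case (Suc L)
    have two: "{1..2::nat} = {1, 2}" by auto
    have shift: "(\<Sum>is\<in>index_tuples L 2. if sum_list (2 # is) - Suc L = k then 1 else 0 :: nat)
        = (\<Sum>is\<in>index_tuples L 2. if Suc (sum_list is - L) = k then 1 else 0)"
      by (rule sum.cong) (auto dest: sum_list_index_tuples_bounds)
    have "(\<Sum>is\<in>index_tuples (Suc L) 2. if sum_list is - Suc L = k then 1 else 0 :: nat)
        = (\<Sum>is\<in>index_tuples L 2. if sum_list is - L = k then 1 else 0)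
          + (\<Sum>is\<in>index_tuples L 2. if Suc (sum_list is - L) = k then 1 else 0)"
      unfolding sum_index_tuples_Suc two using shift by simp
    also have "\<dots> = Suc L choose k"
      using Suc.IH[of k] Suc.IH[of "k - 1"] by (cases k) simp_all
    finally show ?case .
  qed
  thus ?thesis by (simp add: sum.If_cases finite_index_tuples Int_def)
qed

lemma sum_group_by_level:
  fixes G :: "nat \<Rightarrow> real"
  assumes "finite T" and "\<And>x. x \<in> T \<Longrightarrow> f x \<le> L"
  shows "(\<Sum>x\<in>T. G (f x)) = (\<Sum>k=0..L. real (card {x \<in> T. f x = k}) * G k)"
proof -
  have "(\<Sum>x\<in>T. G (f x)) = (\<Sum>k=0..L. \<Sum>x\<in>{x \<in> T. f x = k}. G (f x))"
    by (rule sum.group[symmetric]) (use assms in auto)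
  also have "\<dots> = (\<Sum>k=0..L. real (card {x \<in> T. f x = k}) * G k)"
    by simp
  finally show ?thesis .
qed

lemma prod_list_Vandermonde_point:
  fixes a b :: real
  assumes "is \<in> index_tuples l d"
  shows "prod_list (map (\<lambda>i. a ^ (d - i) * b ^ (i - 1)) is)
         = a ^ (d * l - sum_list is) * b ^ (sum_list is - l)"
  using assms
proof (induction "is" arbitrary: l)
  case Nil thus ?case by (simp add: index_tuples_def)
next
  case (Cons i xs)
  then obtain l' where l: "l = Suc l'" and xs: "xs \<in> index_tuples l' d" and i: "i \<in> {1..d}"
    by (auto simp: index_tuples_def)
  note bounds = sum_list_index_tuples_bounds[OF xs]
  have "d * l - sum_list (i # xs) = (d - i) + (d * l' - sum_list xs)"
    and "sum_list (i # xs) - l = (i - 1) + (sum_list xs - l')"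
    using i bounds l by (simp_all add: algebra_simps)
  thus ?case using Cons.IH[OF xs] by (simp add: power_add)
qed

lemma tensor_form_cong:
  assumes "\<And>i. i \<in> {1..d} \<Longrightarrow> x i = y i"
  shows "tensor_form l d B x = tensor_form l d B y"
  unfolding tensor_form_def
proof (rule sum.cong[OF refl])
  fix "is" assume "is \<in> index_tuples l d"
  hence same: "map x is = map y is"
    using assms by (auto simp: index_tuples_def)
  show "B is * prod_list (map x is) = B is * prod_list (map y is)"
    by (simp only: same)
qed

lemma tensor_form_level_Vandermonde_point:
  fixes a b :: real and c :: "nat \<Rightarrow> real"
  shows "tensor_form l d (\<lambda>is. c (sum_list is - l)) (\<lambda>i. a ^ (d - i) * b ^ (i - 1))
       = (\<Sum>k=0..(d - 1) * l. real (card {is \<in> index_tuples l d. sum_list is - l = k})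
                               * (c k * a ^ ((d - 1) * l - k) * b ^ k))"
proof -
  let ?G = "\<lambda>k. c k * a ^ ((d - 1) * l - k) * b ^ k"
  have "tensor_form l d (\<lambda>is. c (sum_list is - l)) (\<lambda>i. a ^ (d - i) * b ^ (i - 1))
      = (\<Sum>is\<in>index_tuples l d. ?G (sum_list is - l))"
    unfolding tensor_form_def
  proof (rule sum.cong[OF refl])
    fix "is" assume tuple: "is \<in> index_tuples l d"
    note bounds = sum_list_index_tuples_bounds[OF tuple]
    hence "d * l - sum_list is = (d - 1) * l - (sum_list is - l)"
      by (simp add: algebra_simps)
    thus "c (sum_list is - l) * prod_list (map (\<lambda>i. a ^ (d - i) * b ^ (i - 1)) is)
        = ?G (sum_list is - l)"
      unfolding prod_list_Vandermonde_point[OF tuple] by simp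
  qed
  also have "\<dots> = (\<Sum>k=0..(d - 1) * l.
                    real (card {is \<in> index_tuples l d. sum_list is - l = k}) * ?G k)"
    by (rule sum_group_by_level)
       (auto simp: finite_index_tuples algebra_simps dest: sum_list_index_tuples_bounds)
  finally show ?thesis .
qed

lemma hankel_form_Vandermonde_point:
  fixes a b :: real
  shows "tensor_form m n (hankel_tensor m v) (\<lambda>i. a ^ (n - i) * b ^ (i - 1))
       = (\<Sum>k=0..(n - 1) * m. real (s_count k m n) * (v k * a ^ ((n - 1) * m - k) * b ^ k))"
  unfolding hankel_tensor_def s_count_def by (rule tensor_form_level_Vandermonde_point)

lemma plane_form:
  fixes y :: "nat \<Rightarrow> real"
  shows "tensor_form ((n - 1) * m) 2 (plane_tensor m n v) y
       = (\<Sum>k=0..(n - 1) * m. real (s_count k m n) * (v k * y 1 ^ ((n - 1) * m - k) * y 2 ^ k))"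
proof -
  let ?L = "(n - 1) * m"
  define c where "c k = real (s_count k m n) * v k / real (?L choose k)" for k
  have "plane_tensor m n v = (\<lambda>is. c (sum_list is - ?L))"
    unfolding plane_tensor_def c_def Let_def ..
  moreover have "tensor_form ?L 2 B y = tensor_form ?L 2 B (\<lambda>i. y 1 ^ (2 - i) * y 2 ^ (i - 1))"
    for B by (rule tensor_form_cong) (auto simp: numeral_2_eq_2 le_Suc_eq)
  ultimately have "tensor_form ?L 2 (plane_tensor m n v) y
      = (\<Sum>k=0..?L. real (?L choose k) * (c k * y 1 ^ (?L - k) * y 2 ^ k))"
    using tensor_form_level_Vandermonde_point[of ?L 2 c "y 1" "y 2"]
    by (simp add: card_index_tuples_2_level)
  also have "\<dots> = (\<Sum>k=0..?L. real (s_count k m n) * (v k * y 1 ^ (?L - k) * y 2 ^ k))"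
    by (rule sum.cong) (auto simp: c_def)
  finally show ?thesis .
qed

lemma plane_form_eq_hankel_form:
  fixes y :: "nat \<Rightarrow> real"
  shows "tensor_form ((n - 1) * m) 2 (plane_tensor m n v) y
       = tensor_form m n (hankel_tensor m v) (\<lambda>i. y 1 ^ (n - i) * y 2 ^ (i - 1))"
  unfolding plane_form hankel_form_Vandermonde_point ..

theorem theorem1:
  fixes m n :: nat and v :: "nat \<Rightarrow> real"
  assumes "m \<ge> 2" and "n \<ge> 2"
  shows "(copositive_tensor m n (hankel_tensor m v) \<longrightarrow>
            copositive_tensor ((n - 1) * m) 2 (plane_tensor m n v))
       \<and> (even m \<and> psd_tensor m n (hankel_tensor m v) \<longrightarrow>
            psd_tensor ((n - 1) * m) 2 (plane_tensor m n v))"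
proof (intro conjI impI)
  assume "copositive_tensor m n (hankel_tensor m v)"
  thus "copositive_tensor ((n - 1) * m) 2 (plane_tensor m n v)"
    unfolding copositive_tensor_def plane_form_eq_hankel_form by simp
next
  assume "even m \<and> psd_tensor m n (hankel_tensor m v)"
  thus "psd_tensor ((n - 1) * m) 2 (plane_tensor m n v)"
    unfolding psd_tensor_def plane_form_eq_hankel_form by simp
qed

end
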